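(* Every $3$-januarial is of simple type; that is, its common graph $\Upsilon$ is a union of pairwise disjoint simple circuits.
   Context: Let $\Delta(2,3,\ell)=\langle x,y:x^2=y^3=(xy)^\ell=1\rangle$, acting on a finite set $S$. The coset graph has: - vertex set $S$; - an undirected $x$-edge joining each pair of points transposed by $x$; - a directed $y$-edge $u\to uy$. It is $2$-cell embedded in a closed orientable surface via the rotation system (incoming $y$-edge, outgoing $y$-edge, $x$-edge) at each vertex. The faces are $y$-faces and $xy$-faces; this is the coset diagram. A $3$-januarial is the coset diagram of such an action, for some $\ell$, in which $\langle xy\rangle$ has exactly two orbits, each of size $|S|/2$. Let $S_1,S_2$ be the closures of its two $xy$-faces. Collapsing each $y$-face to a point gives the companion diagram, with images $S_i'$ of $S_i$. The common graph is $\Upsilon=S_1'\cap S_2'$. A januarial is of simple type if $\Upsilon$ consists of pairwise disjoint simple circuits. *)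

theory Defs
  imports "HOL-Combinatorics.Permutations"
begin

text \<open>Right actions: the point u acted on by the word g h is h (g u).
  The action of Delta(2,3,l) on S is given by the images x, y of the generators,
  which are permutations of S satisfying the defining relations.\<close>

definition orb :: "('a \<Rightarrow> 'a) \<Rightarrow> 'a \<Rightarrow> 'a set" where
  "orb f u = {(f ^^ n) u | n. True}"

definition xy_orbits :: "'a set \<Rightarrow> ('a \<Rightarrow> 'a) \<Rightarrow> ('a \<Rightarrow> 'a) \<Rightarrow> 'a set set" where
  "xy_orbits S x y = orb (y \<circ> x) ` S"

definition triangle_action :: "'a set \<Rightarrow> ('a \<Rightarrow> 'a) \<Rightarrow> ('a \<Rightarrow> 'a) \<Rightarrow> bool" where
  "triangle_action S x y \<longleftrightarrow> finite S \<and> x permutes S \<and> y permutes S \<and>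
     (\<forall>u\<in>S. x (x u) = u) \<and> (\<forall>u\<in>S. y (y (y u)) = u) \<and>
     (\<exists>l::nat. l \<ge> 1 \<and> (\<forall>u\<in>S. ((y \<circ> x) ^^ l) u = u))"

definition januarial3 :: "'a set \<Rightarrow> ('a \<Rightarrow> 'a) \<Rightarrow> ('a \<Rightarrow> 'a) \<Rightarrow> bool" where
  "januarial3 S x y \<longleftrightarrow> triangle_action S x y \<and>
     (\<exists>O1 O2. O1 \<noteq> O2 \<and> xy_orbits S x y = {O1, O2} \<and>
              2 * card O1 = card S \<and> 2 * card O2 = card S)"

text \<open>Companion diagram: vertices are the y-orbits (each y-face collapsed to a point);
  edges are the x-edges, represented as the sets {u, u x} with u x \<noteq> u;
  the edge {u, u x} joins the vertices containing u and u x.\<close>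
definition cvert :: "('a \<Rightarrow> 'a) \<Rightarrow> 'a \<Rightarrow> 'a set" where
  "cvert y u = orb y u"

definition joins :: "('a \<Rightarrow> 'a) \<Rightarrow> ('a \<Rightarrow> 'a) \<Rightarrow> 'a set \<Rightarrow> 'a set \<Rightarrow> 'a set \<Rightarrow> bool" where
  "joins x y e V W \<longleftrightarrow> (\<exists>u. e = {u, x u} \<and> x u \<noteq> u \<and>
      ((cvert y u = V \<and> cvert y (x u) = W) \<or> (cvert y u = W \<and> cvert y (x u) = V)))"

text \<open>Image S' in the companion diagram of the closure of the xy-face with orbit O.
  The boundary walk of this face is u, u x, u x y, ... (u in O): its vertices are
  the points of O and their x-images, its x-edges are {u, u x} for u in O, and its
  y-edges (collapsed in the companion diagram) are u x \<rightarrow> u x y.\<close>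
definition face_vertices :: "('a \<Rightarrow> 'a) \<Rightarrow> ('a \<Rightarrow> 'a) \<Rightarrow> 'a set \<Rightarrow> 'a set set" where
  "face_vertices x y F = cvert y ` (F \<union> x ` F)"

definition face_edges :: "('a \<Rightarrow> 'a) \<Rightarrow> 'a set \<Rightarrow> 'a set set" where
  "face_edges x F = {{u, x u} | u. u \<in> F \<and> x u \<noteq> u}"

definition common_vertices :: "('a \<Rightarrow> 'a) \<Rightarrow> ('a \<Rightarrow> 'a) \<Rightarrow> 'a set \<Rightarrow> 'a set \<Rightarrow> 'a set set" where
  "common_vertices x y O1 O2 = face_vertices x y O1 \<inter> face_vertices x y O2"

definition common_edges :: "('a \<Rightarrow> 'a) \<Rightarrow> 'a set \<Rightarrow> 'a set \<Rightarrow> 'a set set" where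
  "common_edges x O1 O2 = face_edges x O1 \<inter> face_edges x O2"

definition simple_circuit :: "('a \<Rightarrow> 'a) \<Rightarrow> ('a \<Rightarrow> 'a) \<Rightarrow> 'a set list \<times> 'a set list \<Rightarrow> bool" where
  "simple_circuit x y c \<longleftrightarrow> (case c of (vs, es) \<Rightarrow>
     length vs \<ge> 1 \<and> length es = length vs \<and> distinct vs \<and> distinct es \<and>
     (\<forall>i < length vs. joins x y (es ! i) (vs ! i) (vs ! (Suc i mod length vs))))"

definition disjoint_simple_circuits ::
  "('a \<Rightarrow> 'a) \<Rightarrow> ('a \<Rightarrow> 'a) \<Rightarrow> 'a set set \<Rightarrow> 'a set set \<Rightarrow> bool" where
  "disjoint_simple_circuits x y VS ES \<longleftrightarrow>
     (\<exists>C. (\<forall>c\<in>C. simple_circuit x y c) \<and>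
          (\<forall>c\<in>C. \<forall>d\<in>C. c \<noteq> d \<longrightarrow> set (fst c) \<inter> set (fst d) = {}) \<and>
          (\<Union>c\<in>C. set (fst c)) = VS \<and> (\<Union>c\<in>C. set (snd c)) = ES)"

definition simple_type :: "'a set \<Rightarrow> ('a \<Rightarrow> 'a) \<Rightarrow> ('a \<Rightarrow> 'a) \<Rightarrow> bool" where
  "simple_type S x y \<longleftrightarrow> (\<forall>O1 O2. O1 \<noteq> O2 \<and> xy_orbits S x y = {O1, O2} \<longrightarrow>
     disjoint_simple_circuits x y (common_vertices x y O1 O2) (common_edges x O1 O2))"

end

theory Submission
  imports Defs "HOL-Combinatorics.Orbits"
begin

text \<open>Let F and S - F be the two xy-orbits; each is invariant under u \<mapsto> u x y, and this is
  all that is used about the januarial. A y-face is a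
  triangle {u, u y, u y y}; it is a vertex of \<Upsilon> iff it meets both F and S - F, and then it
  contains exactly one exit, a point d \<in> F with d y \<notin> F. The common x-edges are exactly the
  edges {d, d x} with d an exit, and the x-edge at an exit d leads to a triangle that again
  meets both faces. Sending d to the exit of that triangle is injective, hence a permutation
  of the finite set of exits, and its cycles are the disjoint simple circuits making up \<Upsilon>.\<close>

lemma orbit_eq_of_mem:
  assumes "permutation f" and "e \<in> orbit f d"
  shows "orbit f e = orbit f d"
  using orbit_cyclic_eq3[OF cyclic_on_orbit'[OF assms(1)] assms(2)] .

lemma disjoint_orbits:
  assumes "permutation f" and "orbit f d \<noteq> orbit f d'"
  shows "orbit f d \<inter> orbit f d' = {}"
proof (rule ccontr)
  assume "orbit f d \<inter> orbit f d' \<noteq> {}"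
  then obtain e where "e \<in> orbit f d" "e \<in> orbit f d'"
    by blast
  then show False
    using assms orbit_eq_of_mem[OF assms(1)] by metis
qed

definition orbit_walk :: "('b \<Rightarrow> 'b) \<Rightarrow> ('b \<Rightarrow> 'c) \<Rightarrow> 'b \<Rightarrow> 'c list" where
  "orbit_walk f g d = map (\<lambda>i. g ((f ^^ i) d)) [0..<funpow_dist1 f d d]"

lemma set_orbit_walk:
  assumes "d \<in> orbit f d"
  shows "set (orbit_walk f g d) = g ` orbit f d"
  unfolding orbit_walk_def orbit_conv_funpow_dist1[OF assms] by (simp del: upt_Suc add: image_image)

lemma distinct_orbit_walk:
  assumes "d \<in> orbit f d" and "inj_on g (orbit f d)"
  shows "distinct (orbit_walk f g d)"
proof -
  have "inj_on (\<lambda>i. g ((f ^^ i) d)) {0..<funpow_dist1 f d d}"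
    using comp_inj_on[OF inj_on_funpow_dist1[OF assms(1)]] assms
    by (simp add: orbit_conv_funpow_dist1[OF assms(1)] comp_def del: upt_Suc)
  then show ?thesis
    unfolding orbit_walk_def by (simp add: distinct_map del: upt_Suc)
qed

lemma simple_circuit_orbit_walk:
  assumes "permutation tau"
    and "inj_on V (orbit tau d)" and "inj_on E (orbit tau d)"
    and "\<And>e. e \<in> orbit tau d \<Longrightarrow> joins x y (E e) (V e) (V (tau e))"
  shows "simple_circuit x y (orbit_walk tau V d, orbit_walk tau E d)"
proof -
  let ?n = "funpow_dist1 tau d d"
  have self: "d \<in> orbit tau d"
    using assms(1) by (rule permutation_self_in_orbit)
  have wrap: "(tau ^^ (Suc i mod ?n)) d = tau ((tau ^^ i) d)" for i
    using funpow_mod_eq[OF funpow_dist1_prop[OF self], of "Suc i"] by simp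
  have "joins x y (E ((tau ^^ i) d)) (V ((tau ^^ i) d)) (V ((tau ^^ (Suc i mod ?n)) d))" for i
    unfolding wrap by (intro assms(4) funpow_in_orbit[OF self])
  then show ?thesis
    using distinct_orbit_walk[OF self assms(2)] distinct_orbit_walk[OF self assms(3)]
    by (simp add: simple_circuit_def orbit_walk_def del: upt_Suc)
qed

text \<open>A circuit is attached to an orbit rather than to a point of it: the walks starting at
  different points of one orbit are rotations of each other and share their vertices.\<close>

definition orbit_circuit ::
    "('b \<Rightarrow> 'b) \<Rightarrow> ('b \<Rightarrow> 'c) \<Rightarrow> ('b \<Rightarrow> 'e) \<Rightarrow> 'b set \<Rightarrow> 'c list \<times> 'e list" where
  "orbit_circuit f V E A = (orbit_walk f V (SOME d. d \<in> A), orbit_walk f E (SOME d. d \<in> A))"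

lemma orbit_some_orbit:
  assumes "permutation f"
  shows "orbit f (SOME e. e \<in> orbit f d) = orbit f d"
  using orbit_eq_of_mem[OF assms] someI[of "\<lambda>e. e \<in> orbit f d", OF permutation_self_in_orbit[OF assms]]
  by blast

lemma set_orbit_circuit:
  assumes "permutation f"
  shows "set (fst (orbit_circuit f V E (orbit f d))) = V ` orbit f d"
    and "set (snd (orbit_circuit f V E (orbit f d))) = E ` orbit f d"
  unfolding orbit_circuit_def fst_conv snd_conv set_orbit_walk[OF permutation_self_in_orbit[OF assms]]
    orbit_some_orbit[OF assms] by simp_all

lemma simple_circuit_orbit_circuit:
  assumes "permutation tau"
    and "inj_on V (orbit tau d)" and "inj_on E (orbit tau d)"
    and "\<And>e. e \<in> orbit tau d \<Longrightarrow> joins x y (E e) (V e) (V (tau e))"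
  shows "simple_circuit x y (orbit_circuit tau V E (orbit tau d))"
  unfolding orbit_circuit_def
  by (rule simple_circuit_orbit_walk[OF assms(1)]) (use assms in \<open>simp_all add: orbit_some_orbit\<close>)

lemma disjoint_simple_circuits_permutation:
  assumes "tau permutes D" and "finite D"
    and "inj_on V D" and "inj_on E D"
    and "\<And>d. d \<in> D \<Longrightarrow> joins x y (E d) (V d) (V (tau d))"
  shows "disjoint_simple_circuits x y (V ` D) (E ` D)"
proof -
  have perm: "permutation tau"
    using assms(1,2) by (auto simp: permutation_permutes)
  have orbit_D: "orbit tau d \<subseteq> D" if "d \<in> D" for d
    using permutes_orbit_subset[OF assms(1) that] .
  let ?C = "orbit_circuit tau V E ` orbit tau ` D"
  show ?thesis
    unfolding disjoint_simple_circuits_def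
  proof (intro exI[of _ ?C] conjI ballI impI)
    fix c assume "c \<in> ?C"
    then obtain d where d: "d \<in> D" and c: "c = orbit_circuit tau V E (orbit tau d)" by blast
    show "simple_circuit x y c"
      unfolding c using assms(3-5) orbit_D[OF d]
      by (intro simple_circuit_orbit_circuit[OF perm]) (auto intro: inj_on_subset)
  next
    fix c c' assume "c \<in> ?C" "c' \<in> ?C" "c \<noteq> c'"
    then obtain d d' where d: "d \<in> D" "d' \<in> D"
      and c: "c = orbit_circuit tau V E (orbit tau d)" "c' = orbit_circuit tau V E (orbit tau d')"
      by blast
    have "orbit tau d \<noteq> orbit tau d'"
      using c \<open>c \<noteq> c'\<close> by auto
    then have "orbit tau d \<inter> orbit tau d' = {}"
      by (rule disjoint_orbits[OF perm])
    then show "set (fst c) \<inter> set (fst c') = {}"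
      using inj_on_image_Int[OF assms(3) orbit_D[OF d(1)] orbit_D[OF d(2)]]
      unfolding c set_orbit_circuit[OF perm] by simp
  next
    have cover: "\<Union> (orbit tau ` D) = D"
      using orbit_D permutation_self_in_orbit[OF perm] by blast
    show "(\<Union>c \<in> ?C. set (fst c)) = V ` D" and "(\<Union>c \<in> ?C. set (snd c)) = E ` D"
      by (simp_all add: set_orbit_circuit[OF perm] image_UN[symmetric] cover)
  qed
qed

lemma orb_cube:
  assumes "f (f (f u)) = u"
  shows "orb f u = {u, f u, f (f u)}"
proof -
  have cube: "(f ^^ 3) u = u"
    using assms by (simp add: numeral_3_eq_3)
  then have "u \<in> orbit f u"
    unfolding orbit_altdef by (metis (mono_tags) zero_less_numeral mem_Collect_eq)
  then have "orb f u = orbit f u"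
    unfolding orb_def by (rule orbit_altdef_self_in[symmetric])
  also have "\<dots> = {(f ^^ m) u | m. m < 3}"
    using cube by (simp add: orbit_altdef_bounded)
  also have "\<dots> = (\<lambda>m. (f ^^ m) u) ` {..<3}"
    by blast
  also have "\<dots> = {u, f u, f (f u)}"
    by (simp add: numeral_3_eq_3 lessThan_Suc insert_commute)
  finally show ?thesis .
qed

locale xy_invariant_split =
  fixes S :: "'a set" and x y :: "'a \<Rightarrow> 'a" and F :: "'a set"
  assumes finite_S: "finite S"
    and x_permutes: "x permutes S" and y_permutes: "y permutes S"
    and x_involution: "\<And>u. u \<in> S \<Longrightarrow> x (x u) = u"
    and y_cube: "\<And>u. u \<in> S \<Longrightarrow> y (y (y u)) = u"
    and F_subset: "F \<subseteq> S"
    and F_invariant: "\<And>u. u \<in> S \<Longrightarrow> y (x u) \<in> F \<longleftrightarrow> u \<in> F"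
begin

lemma x_in_S [simp]: "u \<in> S \<Longrightarrow> x u \<in> S"
  using x_permutes by (simp add: permutes_in_image)

lemma y_in_S [simp]: "u \<in> S \<Longrightarrow> y u \<in> S"
  using y_permutes by (simp add: permutes_in_image)

lemma complement: "xy_invariant_split S x y (S - F)"
  by unfold_locales (use finite_S x_permutes y_permutes x_involution y_cube F_invariant in auto)

lemma cvert_triangle: "u \<in> S \<Longrightarrow> cvert y u = {u, y u, y (y u)}"
  unfolding cvert_def by (simp add: orb_cube y_cube)

lemma cvert_y: "u \<in> S \<Longrightarrow> cvert y (y u) = cvert y u"
  by (auto simp: cvert_triangle y_cube)

lemma face_vertices_eq: "face_vertices x y F = cvert y ` F"
proof -
  have "cvert y (x u) = cvert y (y (x u))" "y (x u) \<in> F" if "u \<in> F" for u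
    using that F_subset F_invariant by (auto simp: cvert_y)
  then show ?thesis
    unfolding face_vertices_def by blast
qed

definition exits :: "'a set" where
  "exits = {d \<in> F. y d \<notin> F}"

lemma exits_subset: "exits \<subseteq> S"
  using F_subset by (auto simp: exits_def)

lemma inj_on_cvert_exits: "inj_on (cvert y) exits"
proof (rule inj_onI)
  fix d d' assume d: "d \<in> exits" "d' \<in> exits" "cvert y d = cvert y d'"
  then have "d' \<in> {d, y d, y (y d)}"
    using exits_subset by (metis cvert_triangle insertI1 subsetD)
  then show "d = d'"
    using d exits_subset y_cube by (auto simp: exits_def)
qed

lemma exit_in_mixed_triangle:
  assumes "p \<in> F" "q \<in> cvert y p" "q \<notin> F"
  shows "\<exists>d \<in> exits. cvert y d = cvert y p"
proof (cases "y p \<in> F")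
  case True
  then have "y (y p) \<notin> F"
    using assms F_subset by (auto simp: cvert_triangle)
  then show ?thesis
    using True assms(1) F_subset by (intro bexI[of _ "y p"]) (auto simp: exits_def cvert_y)
next
  case False
  then show ?thesis
    using assms(1) by (auto simp: exits_def)
qed

lemma x_exit:
  assumes "d \<in> exits"
  shows "x d \<in> S - F" "y (x d) \<in> F"
proof -
  have "d \<in> S" "d \<in> F" "y d \<notin> F"
    using assms exits_subset by (auto simp: exits_def)
  then show "x d \<in> S - F" "y (x d) \<in> F"
    using F_invariant[of d] F_invariant[of "x d"] x_involution[of d] by auto
qed

definition next_exit :: "'a \<Rightarrow> 'a" where
  "next_exit d = (if d \<in> exits then SOME d'. d' \<in> exits \<and> cvert y d' = cvert y (x d) else d)"

lemma next_exit:
  assumes "d \<in> exits"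
  shows "next_exit d \<in> exits" and "cvert y (next_exit d) = cvert y (x d)"
proof -
  have "x d \<in> cvert y (x d)"
    using x_exit[OF assms] by (simp add: cvert_triangle)
  then have "x d \<in> cvert y (y (x d))"
    using x_exit[OF assms] by (simp add: cvert_y)
  then have "\<exists>d'. d' \<in> exits \<and> cvert y d' = cvert y (x d)"
    using exit_in_mixed_triangle[of "y (x d)" "x d"] x_exit[OF assms] by (simp add: cvert_y Bex_def)
  from someI_ex[OF this] show "next_exit d \<in> exits" "cvert y (next_exit d) = cvert y (x d)"
    unfolding next_exit_def using assms by simp_all
qed

lemma next_exit_permutes: "next_exit permutes exits"
proof (rule inj_imp_permutes)
  show "inj_on next_exit exits"
  proof (rule inj_onI)
    fix d d' assume d: "d \<in> exits" "d' \<in> exits" "next_exit d = next_exit d'"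
    then have "cvert y (x d) = cvert y (x d')"
      using next_exit(2) by metis
    moreover have "x d \<in> xy_invariant_split.exits y (S - F)" "x d' \<in> xy_invariant_split.exits y (S - F)"
      using x_exit d(1,2) by (auto simp: xy_invariant_split.exits_def[OF complement])
    ultimately have "x d = x d'"
      by (rule inj_onD[OF xy_invariant_split.inj_on_cvert_exits[OF complement]])
    then show "d = d'"
      using d(1,2) exits_subset x_involution by (metis subsetD)
  qed
  show "finite exits"
    using finite_S exits_subset by (rule finite_subset[rotated])
  show "next_exit d \<in> exits" if "d \<in> exits" for d
    using that by (rule next_exit(1))
  show "next_exit d = d" if "d \<notin> exits" for d
    using that by (simp add: next_exit_def)
qed

lemma joins_next_exit:
  assumes "d \<in> exits"
  shows "joins x y {d, x d} (cvert y d) (cvert y (next_exit d))"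
  unfolding joins_def next_exit(2)[OF assms] using x_exit[OF assms] assms
  by (auto simp: exits_def)

lemma inj_on_exit_edge: "inj_on (\<lambda>d. {d, x d}) exits"
proof (rule inj_onI)
  fix d d' assume d: "d \<in> exits" "d' \<in> exits" "{d, x d} = {d', x d'}"
  then show "d = d'"
    using x_exit[OF d(1)] x_exit[OF d(2)] by (auto simp: exits_def doubleton_eq_iff)
qed

lemma common_edges_eq: "common_edges x F (S - F) = (\<lambda>d. {d, x d}) ` exits"
proof (intro equalityI subsetI)
  fix e assume "e \<in> (\<lambda>d. {d, x d}) ` exits"
  then obtain d where d: "d \<in> exits" and e: "e = {d, x d}" by blast
  have "d \<in> F" "x d \<noteq> d" "x d \<in> S - F" "x (x d) = d"
    using d x_exit[OF d] exits_subset x_involution by (auto simp: exits_def)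
  then have in_F: "e \<in> face_edges x F"
    unfolding face_edges_def e by blast
  have "e = {x d, x (x d)}" "x (x d) \<noteq> x d"
    using \<open>x (x d) = d\<close> \<open>x d \<noteq> d\<close> by (auto simp: e)
  then have "e \<in> face_edges x (S - F)"
    unfolding face_edges_def using \<open>x d \<in> S - F\<close> by blast
  with in_F show "e \<in> common_edges x F (S - F)"
    by (simp add: common_edges_def)
next
  fix e assume "e \<in> common_edges x F (S - F)"
  then obtain u v where e: "e = {u, x u}" "e = {v, x v}"
    and uv: "u \<in> F" "v \<in> S" "v \<notin> F"
    unfolding common_edges_def face_edges_def by blast
  then have "u = x v"
    by (metis doubleton_eq_iff)
  then have "u \<in> exits"
    using F_invariant[of v] uv by (simp add: exits_def)
  then show "e \<in> (\<lambda>d. {d, x d}) ` exits"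
    using e(1) by blast
qed

lemma common_vertices_eq: "common_vertices x y F (S - F) = cvert y ` exits"
proof -
  have "cvert y ` F \<inter> cvert y ` (S - F) = cvert y ` exits"
  proof (intro equalityI subsetI)
    fix V assume "V \<in> cvert y ` F \<inter> cvert y ` (S - F)"
    then obtain p q where "p \<in> F" "q \<in> S - F" "V = cvert y p" "V = cvert y q"
      by blast
    moreover have "q \<in> cvert y q"
      using \<open>q \<in> S - F\<close> by (simp add: cvert_triangle)
    ultimately obtain d where "d \<in> exits" "cvert y d = V"
      using exit_in_mixed_triangle[of p q] by auto
    then show "V \<in> cvert y ` exits"
      by blast
  next
    fix V assume "V \<in> cvert y ` exits"
    then obtain d where d: "d \<in> exits" "V = cvert y d" by blast
    then have "d \<in> F" "y d \<in> S - F" "V = cvert y (y d)"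
      using exits_subset by (auto simp: exits_def cvert_y)
    then show "V \<in> cvert y ` F \<inter> cvert y ` (S - F)"
      using d(2) by blast
  qed
  then show ?thesis
    unfolding common_vertices_def face_vertices_eq xy_invariant_split.face_vertices_eq[OF complement] .
qed

lemma disjoint_simple_circuits_common_graph:
  "disjoint_simple_circuits x y (common_vertices x y F (S - F)) (common_edges x F (S - F))"
  unfolding common_vertices_eq common_edges_eq
  using next_exit_permutes finite_subset[OF exits_subset finite_S] inj_on_cvert_exits
    inj_on_exit_edge joins_next_exit
  by (rule disjoint_simple_circuits_permutation)

end

lemma orb_eq_orbit: "permutation p \<Longrightarrow> orb p = orbit p"
  unfolding orb_def by (simp add: orbit_altdef_permutation fun_eq_iff)

lemma two_orbits_complement:
  assumes "p permutes S" and "finite S" and "orb p ` S = {A, B}" and "A \<noteq> B"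
  shows "A \<subseteq> S" and "B = S - A" and "\<And>u. u \<in> S \<Longrightarrow> p u \<in> A \<longleftrightarrow> u \<in> A"
proof -
  have perm: "permutation p"
    using assms(1,2) by (auto simp: permutation_permutes)
  have orbits: "orbit p ` S = {A, B}"
    using assms(3) by (simp add: orb_eq_orbit[OF perm])
  obtain a b where a: "a \<in> S" "A = orbit p a" and b: "b \<in> S" "B = orbit p b"
    using orbits by (metis imageE insertI1 insertI2)
  have in_orbit_iff: "u \<in> orbit p w \<longleftrightarrow> orbit p u = orbit p w" for u w
    using orbit_eq_of_mem[OF perm, of u w] permutation_self_in_orbit[OF perm, of u] by auto
  have orbit_subset: "orbit p u \<subseteq> S" if "u \<in> S" for u
    using permutes_orbit_subset[OF assms(1) that] .
  show "A \<subseteq> S"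
    using a orbit_subset by simp
  show "B = S - A"
  proof
    have "A \<inter> B = {}"
      using disjoint_orbits[OF perm] a b assms(4) by blast
    then show "B \<subseteq> S - A"
      using b orbit_subset by blast
  next
    show "S - A \<subseteq> B"
    proof
      fix u assume "u \<in> S - A"
      then have "orbit p u \<in> {A, B}" "orbit p u \<noteq> A"
        using orbits a(2) in_orbit_iff by auto
      then show "u \<in> B"
        using b(2) in_orbit_iff by auto
    qed
  qed
  show "p u \<in> A \<longleftrightarrow> u \<in> A" if "u \<in> S" for u
    using in_orbit_iff[of "p u" a] in_orbit_iff[of u a] orbit_eq_of_mem[OF perm orbit.base[of p u]]
    unfolding a(2) by simp
qed

lemma triangle_action_two_xy_orbits:
  assumes "triangle_action S x y" and "xy_orbits S x y = {A, B}" and "A \<noteq> B"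
  shows "xy_invariant_split S x y A" and "B = S - A"
proof -
  have S: "finite S" "x permutes S" "y permutes S"
    and x: "\<And>u. u \<in> S \<Longrightarrow> x (x u) = u" and y: "\<And>u. u \<in> S \<Longrightarrow> y (y (y u)) = u"
    using assms(1) by (auto simp: triangle_action_def)
  have "y \<circ> x permutes S"
    using S by (simp add: permutes_compose)
  note split = two_orbits_complement[OF this S(1) assms(2)[unfolded xy_orbits_def] assms(3)]
  show "xy_invariant_split S x y A"
    using S x y split(1,3) by unfold_locales simp_all
  show "B = S - A"
    using split(2) .
qed

theorem theorem1:
  fixes S :: "'a set" and x y :: "'a \<Rightarrow> 'a"
  assumes "januarial3 S x y"
  shows "simple_type S x y"
  unfolding simple_type_def
proof (intro allI impI)
  fix O1 O2 assume orbits: "O1 \<noteq> O2 \<and> xy_orbits S x y = {O1, O2}"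
  have "triangle_action S x y"
    using assms by (simp add: januarial3_def)
  note split = triangle_action_two_xy_orbits[OF this orbits[THEN conjunct2] orbits[THEN conjunct1]]
  show "disjoint_simple_circuits x y (common_vertices x y O1 O2) (common_edges x O1 O2)"
    unfolding split(2) by (rule xy_invariant_split.disjoint_simple_circuits_common_graph[OF split(1)])
qed

end
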